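(* Let $X$ be a topological space, let $Y$ be a countable compact topological space, and let $f:X\times Y\to\overline{\mathbb R}$ be a separately continuous function. Then $(\wedge_f,\vee_f)$ is a stable pair of Hahn on $X$.
   Context: $\overline{\mathbb R}=[-\infty,+\infty]$ with its usual order topology. For $f:X\times Y\to\overline{\mathbb R}$ the minimal and maximal sections $\wedge_f,\vee_f:X\to\overline{\mathbb R}$ are $\wedge_f(x)=\inf_{y\in Y}f(x,y)$ and $\vee_f(x)=\sup_{y\in Y}f(x,y)$. $f$ is separately continuous if $y\mapsto f(x,y)$ is continuous for each $x\in X$ and $x\mapsto f(x,y)$ is continuous for each $y\in Y$. A pair $(g,h)$ of functions $g,h:X\to\overline{\mathbb R}$ is a stable pair of Hahn if there is a sequence of continuous functions $u_n:X\to\overline{\mathbb R}$ such that $g(x)=\min_{n\in\mathbb N}u_n(x)$ and $h(x)=\max_{n\in\mathbb N}u_n(x)$ for every $x\in X$ (the minimum and maximum being attained). *)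

theory Defs
  imports "HOL-Analysis.Analysis"
begin

definition separately_continuous :: "('a::topological_space \<times> 'b::topological_space \<Rightarrow> ereal) \<Rightarrow> bool" where
  "separately_continuous f \<longleftrightarrow>
     (\<forall>x. continuous_on UNIV (\<lambda>y. f (x, y))) \<and> (\<forall>y. continuous_on UNIV (\<lambda>x. f (x, y)))"

definition min_section :: "('a \<times> 'b \<Rightarrow> ereal) \<Rightarrow> 'a \<Rightarrow> ereal" where
  "min_section f x = (INF y. f (x, y))"

definition max_section :: "('a \<times> 'b \<Rightarrow> ereal) \<Rightarrow> 'a \<Rightarrow> ereal" where
  "max_section f x = (SUP y. f (x, y))"

definition stable_pair_Hahn :: "('a::topological_space \<Rightarrow> ereal) \<Rightarrow> ('a \<Rightarrow> ereal) \<Rightarrow> bool" where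
  "stable_pair_Hahn g h \<longleftrightarrow>
     (\<exists>u :: nat \<Rightarrow> 'a \<Rightarrow> ereal.
        (\<forall>n. continuous_on UNIV (u n)) \<and>
        (\<forall>x. (\<exists>n. u n x = g x) \<and> (\<forall>n. g x \<le> u n x)) \<and>
        (\<forall>x. (\<exists>n. u n x = h x) \<and> (\<forall>n. u n x \<le> h x)))"

end

theory Submission
  imports Defs
begin

text \<open>Enumerate the countable space \<open>Y\<close> as \<open>e 0, e 1, \<dots>\<close> and take \<open>u\<^sub>n x = f (x, e n)\<close>;
  each \<open>u\<^sub>n\<close> is continuous by separate continuity. For fixed \<open>x\<close>, the continuous section
  \<open>y \<mapsto> f (x, y)\<close> attains its infimum and supremum on the compact space \<open>Y\<close>, and these
  extremal points are among the \<open>e n\<close>, so the minimum and maximum over \<open>n\<close> are attained.\<close>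

lemma continuous_attains_INF:
  fixes g :: "'b::topological_space \<Rightarrow> 'c::{complete_linorder, linorder_topology}"
  assumes "compact (UNIV :: 'b set)" and "continuous_on UNIV g"
  shows "\<exists>y. g y = (INF z. g z)"
proof -
  obtain y where "\<forall>z. g y \<le> g z"
    using continuous_attains_inf[OF assms(1) _ assms(2)] by auto
  then have "g y = (INF z. g z)"
    by (intro INF_eqI[symmetric]) auto
  then show ?thesis ..
qed

lemma continuous_attains_SUP:
  fixes g :: "'b::topological_space \<Rightarrow> 'c::{complete_linorder, linorder_topology}"
  assumes "compact (UNIV :: 'b set)" and "continuous_on UNIV g"
  shows "\<exists>y. g y = (SUP z. g z)"
proof -
  obtain y where "\<forall>z. g z \<le> g y"
    using continuous_attains_sup[OF assms(1) _ assms(2)] by auto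
  then have "g y = (SUP z. g z)"
    by (intro SUP_eqI[symmetric]) auto
  then show ?thesis ..
qed

lemma stable_pair_Hahn_INF_SUP:
  fixes u :: "nat \<Rightarrow> 'a::topological_space \<Rightarrow> ereal"
  assumes "\<And>n. continuous_on UNIV (u n)"
    and "\<And>x. \<exists>n. u n x = (INF m. u m x)"
    and "\<And>x. \<exists>n. u n x = (SUP m. u m x)"
  shows "stable_pair_Hahn (\<lambda>x. INF n. u n x) (\<lambda>x. SUP n. u n x)"
  unfolding stable_pair_Hahn_def
  using assms by (metis INF_lower SUP_upper UNIV_I)

lemma INF_surj_reindex:
  assumes "surj e"
  shows "(INF n. g (e n)) = (INF y. g y :: 'c::complete_lattice)"
  using assms by (metis image_image)

lemma SUP_surj_reindex:
  assumes "surj e"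
  shows "(SUP n. g (e n)) = (SUP y. g y :: 'c::complete_lattice)"
  using assms by (metis image_image)

lemma surj_attains_INF_reindex:
  assumes "surj e" and "\<exists>y. g y = (INF z. g z :: 'c::complete_lattice)"
  shows "\<exists>n. g (e n) = (INF m. g (e m))"
proof -
  from assms(2) obtain y where "g y = (INF z. g z)" ..
  moreover from \<open>surj e\<close> obtain n where "e n = y" by (metis surjD)
  ultimately show ?thesis
    using INF_surj_reindex[OF \<open>surj e\<close>] by metis
qed

lemma surj_attains_SUP_reindex:
  assumes "surj e" and "\<exists>y. g y = (SUP z. g z :: 'c::complete_lattice)"
  shows "\<exists>n. g (e n) = (SUP m. g (e m))"
proof -
  from assms(2) obtain y where "g y = (SUP z. g z)" ..
  moreover from \<open>surj e\<close> obtain n where "e n = y" by (metis surjD)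
  ultimately show ?thesis
    using SUP_surj_reindex[OF \<open>surj e\<close>] by metis
qed

theorem theorem2p1:
  fixes f :: "'a::topological_space \<times> 'b::topological_space \<Rightarrow> ereal"
  assumes "countable (UNIV :: 'b set)"
    and "compact (UNIV :: 'b set)"
    and "separately_continuous f"
  shows "stable_pair_Hahn (min_section f) (max_section f)"
proof -
  define e :: "nat \<Rightarrow> 'b" where "e = from_nat_into UNIV"
  have "surj e"
    unfolding e_def using assms(1) by (simp add: range_from_nat_into)
  have cont_x: "\<And>x. continuous_on UNIV (\<lambda>y. f (x, y))"
    and cont_y: "\<And>y. continuous_on UNIV (\<lambda>x. f (x, y))"
    using assms(3) unfolding separately_continuous_def by auto
  have min_eq: "min_section f x = (INF n. f (x, e n))" for x
    unfolding min_section_def using INF_surj_reindex[OF \<open>surj e\<close>, of "\<lambda>y. f (x, y)"] by simp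
  have max_eq: "max_section f x = (SUP n. f (x, e n))" for x
    unfolding max_section_def using SUP_surj_reindex[OF \<open>surj e\<close>, of "\<lambda>y. f (x, y)"] by simp
  have "\<exists>n. f (x, e n) = (INF m. f (x, e m))" for x
    by (rule surj_attains_INF_reindex[OF \<open>surj e\<close> continuous_attains_INF[OF assms(2) cont_x]])
  moreover have "\<exists>n. f (x, e n) = (SUP m. f (x, e m))" for x
    by (rule surj_attains_SUP_reindex[OF \<open>surj e\<close> continuous_attains_SUP[OF assms(2) cont_x]])
  ultimately have "stable_pair_Hahn (\<lambda>x. INF n. f (x, e n)) (\<lambda>x. SUP n. f (x, e n))"
    by (intro stable_pair_Hahn_INF_SUP cont_y)
  then show ?thesis
    unfolding min_eq max_eq .
qed

end
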